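(* For every integer $n\ge 2$ and every real $x$, $$W^{(1)}_{n}(x)=(-2)^{n-1}\,n\,(n-2)!\,\sin^{n}(x)\,W^{(1)}_{n-1}(x).$$
   Context: For smooth functions $f_1,\dots,f_n$ of a real variable $x$, $\mathrm{Wr}\{f_1,\dots,f_n\}$ denotes the determinant of the $n\times n$ matrix with $(i,j)$ entry $f_j^{(i-1)}(x)$. Define $W^{(1)}_1(x):=\sin(2x)$ and, for $n\ge2$, $W^{(1)}_n(x):=\mathrm{Wr}\{\sin(x),\sin(2x),\dots,\sin((n-1)x),\sin((n+1)x)\}$. *)

theory Defs
  imports "HOL-Analysis.Derivative" "Jordan_Normal_Form.Determinant"
begin

definition Wr :: "nat \<Rightarrow> (nat \<Rightarrow> real \<Rightarrow> real) \<Rightarrow> real \<Rightarrow> real" where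
  "Wr n f x = det (mat n n (\<lambda>(i, j). (deriv ^^ i) (f j) x))"

definition W1_fun :: "nat \<Rightarrow> nat \<Rightarrow> real \<Rightarrow> real" where
  "W1_fun n j = (if j < n - 1 then (\<lambda>t. sin (real (j + 1) * t)) else (\<lambda>t. sin (real (n + 1) * t)))"

definition W1 :: "nat \<Rightarrow> real \<Rightarrow> real" where
  "W1 n x = (if n = 1 then sin (2 * x) else Wr n (W1_fun n) x)"

end

theory Submission
  imports Defs
begin

(* Writing sin ((k+1) t) = sin t * U_k (cos t) with the Chebyshev polynomials U_k of the second
   kind, every member of the family is sin t * q_j (cos t) with deg q_j <= j.  The i-th derivative
   of sin t * q (cos t) is a combination of q^(k) (cos t), k <= i, whose coefficients do not depend
   on q and whose diagonal coefficient is sin t * (-sin t)^i.  Hence the Wronskian matrix is a lower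
   triangular matrix times the upper triangular matrix (q_j^(i) (cos x)), whose diagonal entries
   are j! 2^j and, in the last column, n! 2^n cos x. *)

fun chebyshev_U :: "nat \<Rightarrow> real poly" where
  "chebyshev_U 0 = 1"
| "chebyshev_U (Suc 0) = [:0, 2:]"
| "chebyshev_U (Suc (Suc k)) = pCons 0 (smult 2 (chebyshev_U (Suc k))) - chebyshev_U k"

lemma sin_Suc_mult_eq_chebyshev_U:
  "sin (real (Suc k) * t) = sin t * poly (chebyshev_U k) (cos t)"
proof (induction k rule: chebyshev_U.induct)
  case 1
  then show ?case by simp
next
  case 2
  then show ?case by (simp add: sin_double)
next
  case (3 k)
  have "sin (real (Suc (Suc (Suc k))) * t) =
      2 * cos t * sin (real (Suc (Suc k)) * t) - sin (real (Suc k) * t)"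
    using sin_add[of "real (Suc (Suc k)) * t" t] sin_diff[of "real (Suc (Suc k)) * t" t]
    by (simp add: algebra_simps)
  then show ?case
    unfolding 3 by (simp add: algebra_simps)
qed

lemma coeff_chebyshev_U_gt: "k < m \<Longrightarrow> coeff (chebyshev_U k) m = 0"
  and coeff_chebyshev_U_odd: "odd (k + m) \<Longrightarrow> coeff (chebyshev_U k) m = 0"
  and coeff_chebyshev_U_self: "coeff (chebyshev_U k) k = 2 ^ k"
proof (induction k arbitrary: m rule: chebyshev_U.induct)
  case 1
  { case 1 then show ?case by (simp add: coeff_1)
  next
    case 2 then show ?case by (cases m) (auto simp: coeff_1)
  next
    case 3 then show ?case by simp }
next
  case 2
  { case 1 then show ?case by (cases m) (auto simp: coeff_pCons split: nat.splits)
  next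
    case 2
    then have "m \<noteq> 1" by auto
    with 2 show ?case by (cases m) (auto simp: coeff_pCons split: nat.splits)
  next
    case 3 then show ?case by simp }
next
  case (3 k)
  { case 1 then show ?case using "3.IH" by (cases m) (auto simp: coeff_pCons)
  next
    case 2 then show ?case using "3.IH" by (cases m) (auto simp: coeff_pCons)
  next
    case 3 then show ?case using "3.IH" by (simp add: coeff_pCons) }
qed

lemma higher_pderiv_chebyshev_U_eq_0: "k < i \<Longrightarrow> (pderiv ^^ i) (chebyshev_U k) = 0"
  by (rule poly_eqI) (simp add: coeff_higher_pderiv coeff_chebyshev_U_gt)

lemma higher_pderiv_chebyshev_U_self: "(pderiv ^^ k) (chebyshev_U k) = [:fact k * 2 ^ k:]"
  by (rule poly_eqI)
    (auto simp: coeff_higher_pderiv coeff_chebyshev_U_gt coeff_chebyshev_U_self coeff_pCons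
      pochhammer_fact split: nat.split)

lemma higher_pderiv_chebyshev_U_pred:
  assumes "k \<ge> 1"
  shows "(pderiv ^^ (k - 1)) (chebyshev_U k) = [:0, fact k * 2 ^ k:]"
proof (rule poly_eqI)
  fix m
  have "fact k = (pochhammer 2 (k - 1) :: real)"
    using assms pochhammer_rec[of "1::real" "k - 1"] by (simp add: pochhammer_fact)
  moreover have "odd (k + (k - 1))"
    using assms by presburger
  ultimately show "coeff ((pderiv ^^ (k - 1)) (chebyshev_U k)) m = coeff [:0, fact k * 2 ^ k:] m"
    using assms
    by (cases m; cases "m - 1")
      (simp_all add: coeff_higher_pderiv coeff_chebyshev_U_odd coeff_chebyshev_U_self
        coeff_chebyshev_U_gt)
qed

(* A pair (P, Q) encodes the function P (cos x) + sin x * Q (cos x); such functions are closed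
   under differentiation and under multiplication by sin x. *)
definition trig_eval :: "real poly \<times> real poly \<Rightarrow> real \<Rightarrow> real" where
  "trig_eval PQ x = poly (fst PQ) (cos x) + sin x * poly (snd PQ) (cos x)"

definition trig_deriv :: "real poly \<times> real poly \<Rightarrow> real poly \<times> real poly" where
  "trig_deriv PQ = ([:0, 1:] * snd PQ - (1 - [:0, 1:] ^ 2) * pderiv (snd PQ), - pderiv (fst PQ))"

definition trig_times_neg_sin :: "real poly \<times> real poly \<Rightarrow> real poly \<times> real poly" where
  "trig_times_neg_sin PQ = (- ((1 - [:0, 1:] ^ 2) * snd PQ), - fst PQ)"

lemma cos_cos_mult_plus_sin_sin_mult: "cos x * (cos x * y) + sin x * (sin x * y) = (y :: real)"
  by (metis sin_cos_squared_add3 distrib_right mult.assoc mult_1)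

lemma has_real_derivative_poly_cos:
  "((\<lambda>x. poly P (cos x)) has_real_derivative - sin x * poly (pderiv P) (cos x)) (at x)"
  by (rule has_field_derivative_poly[OF DERIV_cos])

lemma trig_eval_has_real_derivative:
  "(trig_eval PQ has_real_derivative trig_eval (trig_deriv PQ) x) (at x)"
  unfolding trig_eval_def[abs_def]
  by (intro DERIV_cong[OF DERIV_add[OF has_real_derivative_poly_cos
        DERIV_mult[OF DERIV_sin has_real_derivative_poly_cos]]])
    (simp add: trig_deriv_def algebra_simps power2_eq_square cos_cos_mult_plus_sin_sin_mult)

lemma trig_eval_times_neg_sin: "trig_eval (trig_times_neg_sin PQ) x = - sin x * trig_eval PQ x"
  by (simp add: trig_eval_def trig_times_neg_sin_def algebra_simps power2_eq_square
      cos_cos_mult_plus_sin_sin_mult)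

lemma trig_eval_add: "trig_eval (PQ + RS) x = trig_eval PQ x + trig_eval RS x"
  by (simp add: trig_eval_def algebra_simps)

lemma trig_eval_0 [simp]: "trig_eval 0 x = 0"
  by (simp add: trig_eval_def)

lemma trig_deriv_0 [simp]: "trig_deriv 0 = 0"
  by (simp add: trig_deriv_def zero_prod_def)

(* higher_deriv_coeff i k is the coefficient of q^(k) (cos x) in the i-th derivative of
   sin x * q (cos x). *)
fun higher_deriv_coeff :: "nat \<Rightarrow> nat \<Rightarrow> real poly \<times> real poly" where
  "higher_deriv_coeff 0 k = (if k = 0 then (0, 1) else 0)"
| "higher_deriv_coeff (Suc i) k = trig_deriv (higher_deriv_coeff i k) +
     (if k = 0 then 0 else trig_times_neg_sin (higher_deriv_coeff i (k - 1)))"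

lemma higher_deriv_coeff_above_diag: "i < k \<Longrightarrow> higher_deriv_coeff i k = 0"
  by (induction i arbitrary: k) (auto simp: trig_deriv_def trig_times_neg_sin_def zero_prod_def)

lemma trig_eval_higher_deriv_coeff_diag:
  "trig_eval (higher_deriv_coeff i i) x = sin x * (- sin x) ^ i"
  by (induction i)
    (simp add: trig_eval_def, simp add: trig_eval_add trig_eval_times_neg_sin
      higher_deriv_coeff_above_diag)

lemma higher_deriv_sin_poly_cos:
  "(deriv ^^ i) (\<lambda>t. sin t * poly q (cos t)) =
     (\<lambda>x. \<Sum>k\<le>i. trig_eval (higher_deriv_coeff i k) x * poly ((pderiv ^^ k) q) (cos x))"
proof (induction i)
  case 0
  show ?case by (simp add: trig_eval_def)
next
  case (Suc i)
  let ?c = "\<lambda>i k x. trig_eval (higher_deriv_coeff i k) x"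
  let ?P = "\<lambda>k x. poly ((pderiv ^^ k) q) (cos x)"
  have "deriv (\<lambda>x. \<Sum>k\<le>i. ?c i k x * ?P k x) x = (\<Sum>k\<le>Suc i. ?c (Suc i) k x * ?P k x)" for x
  proof -
    have "deriv (\<lambda>x. \<Sum>k\<le>i. ?c i k x * ?P k x) x =
        (\<Sum>k\<le>i. trig_eval (trig_deriv (higher_deriv_coeff i k)) x * ?P k x) +
        (\<Sum>k\<le>i. - sin x * ?c i k x * ?P (Suc k) x)"
      unfolding sum.distrib[symmetric]
      by (intro DERIV_imp_deriv DERIV_sum
          DERIV_cong[OF DERIV_mult[OF trig_eval_has_real_derivative has_real_derivative_poly_cos]])
        (simp add: algebra_simps)
    also have "(\<Sum>k\<le>i. trig_eval (trig_deriv (higher_deriv_coeff i k)) x * ?P k x) =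
        (\<Sum>k\<le>Suc i. trig_eval (trig_deriv (higher_deriv_coeff i k)) x * ?P k x)"
      by (simp add: higher_deriv_coeff_above_diag)
    also have "(\<Sum>k\<le>i. - sin x * ?c i k x * ?P (Suc k) x) =
        (\<Sum>k\<le>Suc i. (if k = 0 then 0 else - sin x * ?c i (k - 1) x) * ?P k x)"
      by (subst sum.atMost_Suc_shift) simp
    also have "(\<Sum>k\<le>Suc i. trig_eval (trig_deriv (higher_deriv_coeff i k)) x * ?P k x) + \<dots> =
        (\<Sum>k\<le>Suc i. ?c (Suc i) k x * ?P k x)"
      unfolding sum.distrib[symmetric]
      by (intro sum.cong refl) (simp add: trig_eval_add trig_eval_times_neg_sin algebra_simps)
    finally show ?thesis .
  qed
  then show ?case
    by (simp add: Suc.IH)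
qed

lemma Wr_sin_poly_cos:
  assumes "\<And>i j. j < i \<Longrightarrow> i < n \<Longrightarrow> (pderiv ^^ i) (q j) = 0"
  shows "Wr n (\<lambda>j t. sin t * poly (q j) (cos t)) x =
    (\<Prod>i<n. sin x * (- sin x) ^ i) * (\<Prod>j<n. poly ((pderiv ^^ j) (q j)) (cos x))"
proof -
  let ?L = "mat n n (\<lambda>(i, k). trig_eval (higher_deriv_coeff i k) x)"
  let ?G = "mat n n (\<lambda>(k, j). poly ((pderiv ^^ k) (q j)) (cos x))"
  have L: "?L \<in> carrier_mat n n" and G: "?G \<in> carrier_mat n n"
    by auto
  have "mat n n (\<lambda>(i, j). (deriv ^^ i) (\<lambda>t. sin t * poly (q j) (cos t)) x) = ?L * ?G"
  proof (rule eq_matI)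
    fix i j
    assume "i < dim_row (?L * ?G)" and "j < dim_col (?L * ?G)"
    then have ij: "i < n" "j < n"
      by auto
    have "(?L * ?G) $$ (i, j) =
        (\<Sum>k<n. trig_eval (higher_deriv_coeff i k) x * poly ((pderiv ^^ k) (q j)) (cos x))"
      using ij by (simp add: scalar_prod_def lessThan_atLeast0)
    also have "\<dots> =
        (\<Sum>k\<le>i. trig_eval (higher_deriv_coeff i k) x * poly ((pderiv ^^ k) (q j)) (cos x))"
      by (rule sum.mono_neutral_right) (use ij in \<open>auto simp: higher_deriv_coeff_above_diag\<close>)
    finally show "mat n n (\<lambda>(i, j). (deriv ^^ i) (\<lambda>t. sin t * poly (q j) (cos t)) x) $$ (i, j) =
        (?L * ?G) $$ (i, j)"
      using ij by (simp add: higher_deriv_sin_poly_cos)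
  qed auto
  moreover have "det ?L = (\<Prod>i<n. sin x * (- sin x) ^ i)"
    by (subst det_lower_triangular[of n])
      (auto simp: higher_deriv_coeff_above_diag prod_list_diag_prod
        trig_eval_higher_deriv_coeff_diag atLeast0LessThan)
  moreover have "det ?G = (\<Prod>j<n. poly ((pderiv ^^ j) (q j)) (cos x))"
    by (subst det_upper_triangular[OF upper_triangularI G])
      (auto simp: assms prod_list_diag_prod atLeast0LessThan)
  ultimately show ?thesis
    unfolding Wr_def by (simp add: det_mult[OF L G])
qed

lemma W1_closed_form:
  assumes "n \<ge> 1"
  shows "W1 n x = (\<Prod>i<n. sin x * (- sin x) ^ i) *
    ((\<Prod>j<n - 1. fact j * 2 ^ j) * (fact n * 2 ^ n * cos x))"
proof (cases "n = 1")
  case True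
  then show ?thesis
    by (simp add: W1_def sin_double)
next
  case False
  then obtain m where m: "n = Suc m" "m \<ge> 1"
    using assms by (cases n) auto
  define q where "q j = (if j < m then chebyshev_U j else chebyshev_U n)" for j
  have "W1_fun n = (\<lambda>j t. sin t * poly (q j) (cos t))"
    by (intro ext) (simp add: W1_fun_def q_def m sin_Suc_mult_eq_chebyshev_U[symmetric])
  moreover have "(pderiv ^^ i) (q j) = 0" if "j < i" "i < n" for i j
    using that by (simp add: q_def m higher_pderiv_chebyshev_U_eq_0)
  moreover have "(\<Prod>j<m. poly ((pderiv ^^ j) (q j)) (cos x)) = (\<Prod>j<m. fact j * 2 ^ j)"
    by (intro prod.cong) (simp_all add: q_def higher_pderiv_chebyshev_U_self)
  moreover have "poly ((pderiv ^^ m) (q m)) (cos x) = fact n * 2 ^ n * cos x"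
    using higher_pderiv_chebyshev_U_pred[of n] by (simp add: q_def m)
  ultimately show ?thesis
    using False by (simp add: W1_def Wr_sin_poly_cos m del: fact_Suc)
qed

theorem mainTheorem3:
  fixes n :: nat and x :: real
  assumes "n \<ge> 2"
  shows "W1 n x = (-2) ^ (n - 1) * real n * fact (n - 2) * sin x ^ n * W1 (n - 1) x"
proof -
  obtain m where m: "n = m + 2"
    using assms by (metis add.commute le_Suc_ex)
  have "W1 (m + 2) x = ((\<Prod>i<m + 1. sin x * (- sin x) ^ i) * (sin x * (- sin x) ^ (m + 1))) *
      (((\<Prod>j<m. fact j * 2 ^ j) * (fact m * 2 ^ m)) * (fact (m + 2) * 2 ^ (m + 2) * cos x))"
    by (subst W1_closed_form) simp_all
  moreover have "W1 (m + 1) x = (\<Prod>i<m + 1. sin x * (- sin x) ^ i) *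
      ((\<Prod>j<m. fact j * 2 ^ j) * (fact (m + 1) * 2 ^ (m + 1) * cos x))"
    by (subst W1_closed_form) simp_all
  moreover have "fact (m + 2) = (real m + 2) * fact (m + 1)"
    by (simp add: algebra_simps)
  ultimately show ?thesis
    unfolding m by (simp add: power_minus' power_add algebra_simps)
qed

end
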